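(* Let $\pi_0,\pi_1,\dots$ be generated by policy mirror descent (PMD) with step sizes $\eta_t>0$ that are non-decreasing in $t$. Then for every $k\ge1$ and every $s\in\mathcal S$, $$V^{\pi_k}(s)-V^{\pi^*}(s)\le\frac{\sum_{q\in\mathcal S}\kappa^{\pi^*}_s(q)\,\big[\eta_0\big(V^{\pi_0}(q)-V^{\pi^*}(q)\big)+D^{\pi^*}_{\pi_0}(q)\big]}{\eta_0(1-\gamma)k}.$$
   Context: An infinite-horizon discounted MDP: finite state space $\mathcal S$, finite action space $\mathcal A$, transition probabilities $\mathcal P(s'\mid s,a)$, cost $c:\mathcal S\times\mathcal A\to\mathbb R$, discount $\gamma\in[0,1)$. A policy $\pi$ assigns $\pi(\cdot\mid s)\in\Delta_{|\mathcal A|}$ (probability simplex) to each state. Let $\omega$ be a differentiable convex distance-generating function on $\Delta_{|\mathcal A|}$, and for policies $\pi,\pi'$ let $D^{\pi'}_{\pi}(s):=\omega(\pi'(\cdot\mid s))-\omega(\pi(\cdot\mid s))-\langle\nabla\omega(\pi(\cdot\mid s)),\pi'(\cdot\mid s)-\pi(\cdot\mid s)\rangle$ (Bregman distance). For each $s$, $p\mapsto h^p(s)$ is a closed convex function on $\Delta_{|\mathcal A|}$ that is $\mu_h$-strongly convex w.r.t. this Bregman distance for some $\mu_h\ge0$: $h^{p}(s)-h^{p'}(s)-\langle (h')^{p'}(s,\cdot),p-p'\rangle\ge\mu_h[\omega(p)-\omega(p')-\langle\nabla\omega(p'),p-p'\rangle]$ for subgradients $(h')^{p'}(s,\cdot)$.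 $V^\pi(s)=\mathbb E[\sum_{t\ge0}\gamma^t(c(s_t,a_t)+h^{\pi(\cdot\mid s_t)}(s_t))\mid s_0=s,\ a_t\sim\pi(\cdot\mid s_t),\ s_{t+1}\sim\mathcal P(\cdot\mid s_t,a_t)]$, $Q^\pi(s,a)$ the same with $a_0=a$. $\pi^*$ is an optimal policy ($V^{\pi^*}(s)\le V^\pi(s)$ for all $\pi,s$). $\kappa^\pi_s(q):=(1-\gamma)\sum_{t\ge0}\gamma^t\Pr^\pi\{s_t=q\mid s_0=s\}$. PMD: given $\pi_0$ and step sizes $\eta_t$, for all $s$, $\pi_{t+1}(\cdot\mid s)=\operatorname{argmin}_{p\in\Delta_{|\mathcal A|}}\{\eta_t[\langle Q^{\pi_t}(s,\cdot),p\rangle+h^{p}(s)]+\omega(p)-\omega(\pi_t(\cdot\mid s))-\langle\nabla\omega(\pi_t(\cdot\mid s)),p-\pi_t(\cdot\mid s)\rangle\}$. *)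

theory Defs
  imports "HOL-Analysis.Analysis"
begin

definition prob_simplex :: "(real^'a::finite) set" where
  "prob_simplex = {p. (\<forall>a. 0 \<le> p $ a) \<and> (\<Sum>a\<in>UNIV. p $ a) = 1}"

definition is_policy :: "('s \<Rightarrow> real^'a::finite) \<Rightarrow> bool" where
  "is_policy \<pi> \<longleftrightarrow> (\<forall>s. \<pi> s \<in> prob_simplex)"

definition bregman :: "(real^'a::finite \<Rightarrow> real) \<Rightarrow> (real^'a \<Rightarrow> real^'a) \<Rightarrow> real^'a \<Rightarrow> real^'a \<Rightarrow> real" where
  "bregman \<omega> gw p' p = \<omega> p' - \<omega> p - gw p \<bullet> (p' - p)"

definition Dpol :: "(real^'a::finite \<Rightarrow> real) \<Rightarrow> (real^'a \<Rightarrow> real^'a) \<Rightarrow> ('s \<Rightarrow> real^'a) \<Rightarrow> ('s \<Rightarrow> real^'a) \<Rightarrow> 's \<Rightarrow> real" where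
  "Dpol \<omega> gw \<pi>' \<pi> s = bregman \<omega> gw (\<pi>' s) (\<pi> s)"

definition Ppol :: "('s::finite \<Rightarrow> 'a::finite \<Rightarrow> 's \<Rightarrow> real) \<Rightarrow> ('s \<Rightarrow> real^'a) \<Rightarrow> 's \<Rightarrow> 's \<Rightarrow> real" where
  "Ppol P \<pi> r q = (\<Sum>a\<in>UNIV. \<pi> r $ a * P r a q)"

fun state_dist :: "('s::finite \<Rightarrow> 'a::finite \<Rightarrow> 's \<Rightarrow> real) \<Rightarrow> ('s \<Rightarrow> real^'a) \<Rightarrow> ('s \<Rightarrow> real) \<Rightarrow> nat \<Rightarrow> 's \<Rightarrow> real" where
  "state_dist P \<pi> \<mu> 0 q = \<mu> q"
| "state_dist P \<pi> \<mu> (Suc t) q = (\<Sum>r\<in>UNIV. state_dist P \<pi> \<mu> t r * Ppol P \<pi> r q)"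

definition Prob_state :: "('s::finite \<Rightarrow> 'a::finite \<Rightarrow> 's \<Rightarrow> real) \<Rightarrow> ('s \<Rightarrow> real^'a) \<Rightarrow> nat \<Rightarrow> 's \<Rightarrow> 's \<Rightarrow> real" where
  "Prob_state P \<pi> t s q = state_dist P \<pi> (\<lambda>r. if r = s then 1 else 0) t q"

definition stage_cost :: "('s \<Rightarrow> 'a::finite \<Rightarrow> real) \<Rightarrow> (real^'a \<Rightarrow> 's \<Rightarrow> real) \<Rightarrow> ('s \<Rightarrow> real^'a) \<Rightarrow> 's \<Rightarrow> real" where
  "stage_cost c h \<pi> q = (\<Sum>a\<in>UNIV. \<pi> q $ a * c q a) + h (\<pi> q) q"

definition Vf :: "('s::finite \<Rightarrow> 'a::finite \<Rightarrow> 's \<Rightarrow> real) \<Rightarrow> ('s \<Rightarrow> 'a \<Rightarrow> real) \<Rightarrow> (real^'a \<Rightarrow> 's \<Rightarrow> real) \<Rightarrow> real \<Rightarrow> ('s \<Rightarrow> real^'a) \<Rightarrow> 's \<Rightarrow> real" where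
  "Vf P c h \<gamma> \<pi> s = (\<Sum>t. \<gamma> ^ t * (\<Sum>q\<in>UNIV. Prob_state P \<pi> t s q * stage_cost c h \<pi> q))"

text \<open>Q^pi(s,a): same expectation with a_0 = a fixed (s_1 ~ P(.|s,a), then following pi).\<close>
definition Qf :: "('s::finite \<Rightarrow> 'a::finite \<Rightarrow> 's \<Rightarrow> real) \<Rightarrow> ('s \<Rightarrow> 'a \<Rightarrow> real) \<Rightarrow> (real^'a \<Rightarrow> 's \<Rightarrow> real) \<Rightarrow> real \<Rightarrow> ('s \<Rightarrow> real^'a) \<Rightarrow> 's \<Rightarrow> 'a \<Rightarrow> real" where
  "Qf P c h \<gamma> \<pi> s a = c s a + h (\<pi> s) s
     + (\<Sum>t. \<gamma> ^ Suc t * (\<Sum>q\<in>UNIV. state_dist P \<pi> (P s a) t q * stage_cost c h \<pi> q))"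

definition kappa :: "('s::finite \<Rightarrow> 'a::finite \<Rightarrow> 's \<Rightarrow> real) \<Rightarrow> real \<Rightarrow> ('s \<Rightarrow> real^'a) \<Rightarrow> 's \<Rightarrow> 's \<Rightarrow> real" where
  "kappa P \<gamma> \<pi> s q = (1 - \<gamma>) * (\<Sum>t. \<gamma> ^ t * Prob_state P \<pi> t s q)"

definition is_subgrad_simplex :: "(real^'a::finite \<Rightarrow> real) \<Rightarrow> real^'a \<Rightarrow> real^'a \<Rightarrow> bool" where
  "is_subgrad_simplex f p' g \<longleftrightarrow> (\<forall>p\<in>prob_simplex. f p \<ge> f p' + g \<bullet> (p - p'))"

definition pmd_step :: "('s::finite \<Rightarrow> 'a::finite \<Rightarrow> 's \<Rightarrow> real) \<Rightarrow> ('s \<Rightarrow> 'a \<Rightarrow> real) \<Rightarrow> (real^'a \<Rightarrow> 's \<Rightarrow> real) \<Rightarrow> real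
     \<Rightarrow> (real^'a \<Rightarrow> real) \<Rightarrow> (real^'a \<Rightarrow> real^'a) \<Rightarrow> real \<Rightarrow> ('s \<Rightarrow> real^'a) \<Rightarrow> ('s \<Rightarrow> real^'a) \<Rightarrow> bool" where
  "pmd_step P c h \<gamma> \<omega> gw \<eta> \<pi> \<pi>' \<longleftrightarrow>
     (\<forall>s. is_arg_min (\<lambda>p. \<eta> * ((\<Sum>a\<in>UNIV. Qf P c h \<gamma> \<pi> s a * p $ a) + h p s) + bregman \<omega> gw p (\<pi> s))
                     (\<lambda>p. p \<in> prob_simplex) (\<pi>' s))"

end

(* Each PMD step is a Bregman proximal step on p \<mapsto> <Q^{\<pi>_t}(q,.), p> + h^p(q), so the
   three-point inequality holds against every comparison policy. Against \<pi>_t itself it shows that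
   the advantage of \<pi>_{t+1} over \<pi>_t is nonpositive, hence V^{\<pi>_t} decreases in t. Against \<pi>*,
   after weighting by the discounted occupancy of \<pi>* from s and applying the performance difference
   lemma, it shows that the potential E[V^{\<pi>_t} - V^{\<pi>*}] + E[D(\<pi>*, \<pi>_t)] / \<eta>_t drops by at least
   V^{\<pi>_t}(s) - V^{\<pi>*}(s) per step; this is where \<eta>_t \<le> \<eta>_{t+1} enters. Summing over t < k and
   using the monotonicity of the values bounds k (V^{\<pi>_k}(s) - V^{\<pi>*}(s)) by the initial potential. *)

theory Submission
  imports Defs
begin

lemma convex_prob_simplex: "convex prob_simplex"
  unfolding convex_def prob_simplex_def
  by (simp add: sum.distrib flip: sum_distrib_left)

lemma convex_on_coordinate_combination:
  "convex S \<Longrightarrow> convex_on S (\<lambda>p::real^'a::finite. \<Sum>a\<in>UNIV. w a * p $ a)"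
  unfolding convex_on_def by (simp add: sum.distrib sum_distrib_left algebra_simps)

lemma has_derivative_right_difference_quotient:
  fixes f :: "'v::real_normed_vector \<Rightarrow> real"
  assumes "(f has_derivative f') (at p)"
  shows "((\<lambda>l. (f (p + l *\<^sub>R d) - f p) / l) \<longlongrightarrow> f' d) (at_right 0)"
proof -
  have line: "((\<lambda>l::real. p + l *\<^sub>R d) has_derivative (\<lambda>l. l *\<^sub>R d)) (at 0)"
    by (auto intro!: derivative_eq_intros)
  have "((f \<circ> (\<lambda>l. p + l *\<^sub>R d)) has_derivative (f' \<circ> (\<lambda>l. l *\<^sub>R d))) (at 0)"
    using diff_chain_at[OF line] assms by simp
  moreover have "f' \<circ> (\<lambda>l. l *\<^sub>R d) = (*) (f' d)"
    using linear.scaleR[OF has_derivative_linear[OF assms]] by (auto simp: fun_eq_iff)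
  ultimately have "((\<lambda>l. f (p + l *\<^sub>R d)) has_field_derivative f' d) (at 0 within {0<..})"
    by (simp add: has_field_derivative_def o_def has_derivative_at_withinI)
  then show ?thesis
    unfolding has_field_derivative_iff by simp
qed

lemma has_derivative_lower_bound:
  fixes f :: "'v::real_normed_vector \<Rightarrow> real"
  assumes "(f has_derivative f') (at p)"
    and "\<And>l. 0 < l \<Longrightarrow> l \<le> 1 \<Longrightarrow> l * C \<le> f (p + l *\<^sub>R d) - f p"
  shows "C \<le> f' d"
proof (rule tendsto_lowerbound[OF has_derivative_right_difference_quotient[OF assms(1)]])
  have "\<forall>l>0. l < 1 \<longrightarrow> C \<le> (f (p + l *\<^sub>R d) - f p) / l"
    using assms(2) by (simp add: le_divide_eq mult.commute)
  then show "\<forall>\<^sub>F l in at_right 0. C \<le> (f (p + l *\<^sub>R d) - f p) / l"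
    unfolding eventually_at_right[OF zero_less_one] by (intro exI[of _ 1]) simp
qed simp

lemma has_derivative_upper_bound:
  fixes f :: "'v::real_normed_vector \<Rightarrow> real"
  assumes "(f has_derivative f') (at p)"
    and "\<And>l. 0 < l \<Longrightarrow> l \<le> 1 \<Longrightarrow> f (p + l *\<^sub>R d) - f p \<le> l * C"
  shows "f' d \<le> C"
proof -
  have "- C \<le> - f' d"
  proof (rule has_derivative_lower_bound[OF has_derivative_minus[OF assms(1)]])
    fix l :: real assume "0 < l" "l \<le> 1"
    then show "l * - C \<le> - f (p + l *\<^sub>R d) - - f p"
      using assms(2)[of l] by simp
  qed
  then show ?thesis by simp
qed

lemma bregman_nonneg:
  fixes \<omega> :: "real^'a::finite \<Rightarrow> real"
  assumes "convex_on S \<omega>" "(\<omega> has_derivative (\<lambda>v. gw p \<bullet> v)) (at p)" "p \<in> S" "q \<in> S"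
  shows "0 \<le> bregman \<omega> gw q p"
proof -
  have "gw p \<bullet> (q - p) \<le> \<omega> q - \<omega> p"
  proof (rule has_derivative_upper_bound[OF assms(2)])
    fix l :: real assume "0 < l" "l \<le> 1"
    then have "\<omega> ((1 - l) *\<^sub>R p + l *\<^sub>R q) \<le> (1 - l) * \<omega> p + l * \<omega> q"
      using convex_onD[OF assms(1)] assms(3,4) by simp
    moreover have "(1 - l) *\<^sub>R p + l *\<^sub>R q = p + l *\<^sub>R (q - p)"
      by (simp add: algebra_simps)
    ultimately show "\<omega> (p + l *\<^sub>R (q - p)) - \<omega> p \<le> l * (\<omega> q - \<omega> p)"
      by (simp add: algebra_simps)
  qed
  then show ?thesis
    unfolding bregman_def by simp
qed

lemma bregman_three_point_identity:
  "bregman \<omega> gw p p0 = bregman \<omega> gw p p1 + bregman \<omega> gw p1 p0 + (gw p1 - gw p0) \<bullet> (p - p1)"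
  unfolding bregman_def by (simp add: inner_diff_left inner_diff_right algebra_simps)

lemma bregman_prox_optimality:
  fixes \<omega> :: "real^'a::finite \<Rightarrow> real"
  assumes argmin: "is_arg_min (\<lambda>p. \<eta> * L p + bregman \<omega> gw p p0) (\<lambda>p. p \<in> S) p1"
    and L: "convex_on S L"
    and \<omega>: "(\<omega> has_derivative (\<lambda>v. gw p1 \<bullet> v)) (at p1)"
    and "0 \<le> \<eta>" and p: "p \<in> S"
  shows "gw p0 \<bullet> (p - p1) - \<eta> * (L p - L p1) \<le> gw p1 \<bullet> (p - p1)"
proof (rule has_derivative_lower_bound[OF \<omega>])
  \<comment> \<open>Compare \<open>p1\<close> with the points \<open>pl\<close> of the segment towards \<open>p\<close>; the linear parts of the
    Bregman distances cancel, leaving the increment of \<open>\<omega>\<close> along the segment.\<close>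
  fix l :: real assume l: "0 < l" "l \<le> 1"
  define pl where "pl = (1 - l) *\<^sub>R p1 + l *\<^sub>R p"
  have p1: "p1 \<in> S"
    using argmin by (simp add: is_arg_min_def)
  have "pl \<in> S"
    unfolding pl_def using convexD_alt[OF convex_on_imp_convex[OF L] p1 p] l by simp
  then have "\<eta> * L p1 + bregman \<omega> gw p1 p0 \<le> \<eta> * L pl + bregman \<omega> gw pl p0"
    using argmin unfolding is_arg_min_def by (simp add: not_less)
  moreover have "\<eta> * L pl \<le> \<eta> * ((1 - l) * L p1 + l * L p)"
    unfolding pl_def using convex_onD[OF L] l p1 p \<open>0 \<le> \<eta>\<close> by (simp add: mult_left_mono)
  moreover have "pl = p1 + l *\<^sub>R (p - p1)"
    unfolding pl_def by (simp add: algebra_simps)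
  ultimately show "l * (gw p0 \<bullet> (p - p1) - \<eta> * (L p - L p1)) \<le> \<omega> (p1 + l *\<^sub>R (p - p1)) - \<omega> p1"
    unfolding bregman_def by (simp add: inner_diff_right algebra_simps)
qed

lemma bregman_prox_three_point:
  fixes \<omega> :: "real^'a::finite \<Rightarrow> real"
  assumes "is_arg_min (\<lambda>p. \<eta> * L p + bregman \<omega> gw p p0) (\<lambda>p. p \<in> S) p1"
    and "convex_on S L"
    and "(\<omega> has_derivative (\<lambda>v. gw p1 \<bullet> v)) (at p1)"
    and "0 \<le> \<eta>" and "p \<in> S"
  shows "\<eta> * (L p1 - L p) + bregman \<omega> gw p1 p0 + bregman \<omega> gw p p1 \<le> bregman \<omega> gw p p0"
  using bregman_prox_optimality[OF assms] bregman_three_point_identity[of \<omega> gw p p0 p1]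
  by (simp add: inner_diff_left algebra_simps)

lemma Prob_state_0: "Prob_state P \<pi> 0 s q = (if q = s then 1 else 0)"
  unfolding Prob_state_def by simp

lemma state_dist_mixture:
  "state_dist P \<pi> \<mu> t q = (\<Sum>r\<in>UNIV. \<mu> r * Prob_state P \<pi> t r q)"
proof (induction t arbitrary: q)
  case 0
  then show ?case
    by (simp add: Prob_state_0 if_distrib[of "times _"] cong: if_cong)
next
  case (Suc t)
  have "state_dist P \<pi> \<mu> (Suc t) q
      = (\<Sum>r'\<in>UNIV. \<Sum>r\<in>UNIV. \<mu> r * Prob_state P \<pi> t r r' * Ppol P \<pi> r' q)"
    by (simp add: Suc sum_distrib_right)
  also have "\<dots> = (\<Sum>r\<in>UNIV. \<mu> r * Prob_state P \<pi> (Suc t) r q)"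
    unfolding Prob_state_def by (subst sum.swap) (simp add: sum_distrib_left mult.assoc)
  finally show ?case .
qed

lemma state_dist_Suc_shift:
  "state_dist P \<pi> \<mu> (Suc t) q = state_dist P \<pi> (\<lambda>r. \<Sum>r'\<in>UNIV. \<mu> r' * Ppol P \<pi> r' r) t q"
  by (induction t arbitrary: q) simp_all

lemma Prob_state_Suc:
  "Prob_state P \<pi> (Suc t) s q = (\<Sum>r\<in>UNIV. Ppol P \<pi> s r * Prob_state P \<pi> t r q)"
  unfolding Prob_state_def[of _ _ "Suc t"] state_dist_Suc_shift
  by (simp add: state_dist_mixture if_distrib[of "\<lambda>x. x * _"] cong: if_cong)

locale mdp =
  fixes P :: "'s::finite \<Rightarrow> 'a::finite \<Rightarrow> 's \<Rightarrow> real" and \<gamma> :: real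
  assumes P_nonneg: "\<And>s a s'. 0 \<le> P s a s'"
    and P_sum: "\<And>s a. (\<Sum>s'\<in>UNIV. P s a s') = 1"
    and discount_nonneg: "0 \<le> \<gamma>"
    and discount_less_1: "\<gamma> < 1"
begin

lemma Ppol_nonneg: "is_policy \<pi> \<Longrightarrow> 0 \<le> Ppol P \<pi> r q"
  unfolding Ppol_def is_policy_def prob_simplex_def by (auto intro!: sum_nonneg simp: P_nonneg)

lemma Ppol_sum: "is_policy \<pi> \<Longrightarrow> (\<Sum>q\<in>UNIV. Ppol P \<pi> r q) = 1"
  unfolding Ppol_def is_policy_def prob_simplex_def
  by (subst sum.swap) (simp add: P_sum flip: sum_distrib_left)

lemma Prob_state_nonneg: "is_policy \<pi> \<Longrightarrow> 0 \<le> Prob_state P \<pi> t s q"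
  by (induction t arbitrary: s)
    (auto simp: Prob_state_0 Prob_state_Suc intro!: sum_nonneg mult_nonneg_nonneg Ppol_nonneg)

lemma Prob_state_sum: "is_policy \<pi> \<Longrightarrow> (\<Sum>q\<in>UNIV. Prob_state P \<pi> t s q) = 1"
proof (induction t arbitrary: s)
  case 0
  then show ?case
    by (simp add: Prob_state_0)
next
  case (Suc t)
  then show ?case
    unfolding Prob_state_Suc
    by (subst sum.swap) (simp add: Ppol_sum flip: sum_distrib_left)
qed

lemma Prob_state_le_1: "is_policy \<pi> \<Longrightarrow> Prob_state P \<pi> t s q \<le> 1"
  using member_le_sum[of q UNIV "Prob_state P \<pi> t s"] by (simp add: Prob_state_nonneg Prob_state_sum)

lemma summable_discounted_Prob_state: "is_policy \<pi> \<Longrightarrow> summable (\<lambda>t. \<gamma> ^ t * Prob_state P \<pi> t s q)"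
  by (rule summable_comparison_test'[OF summable_geometric[of \<gamma>]])
    (use discount_nonneg discount_less_1 in \<open>auto simp: Prob_state_nonneg Prob_state_le_1
       intro!: mult_left_le\<close>)

lemma summable_discounted_expectation:
  "is_policy \<pi> \<Longrightarrow> summable (\<lambda>t. \<gamma> ^ t * (\<Sum>q\<in>UNIV. Prob_state P \<pi> t s q * y q))"
  unfolding sum_distrib_left mult.assoc[symmetric]
  by (intro summable_sum summable_mult2 summable_discounted_Prob_state)

text \<open>The unnormalised discounted visitation measure: \<open>kappa = (1 - \<gamma>) * occupancy\<close>.\<close>

definition occupancy :: "('s \<Rightarrow> real^'a) \<Rightarrow> 's \<Rightarrow> 's \<Rightarrow> real" where
  "occupancy \<pi> s q = (\<Sum>t. \<gamma> ^ t * Prob_state P \<pi> t s q)"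

lemma occupancy_nonneg: "is_policy \<pi> \<Longrightarrow> 0 \<le> occupancy \<pi> s q"
  unfolding occupancy_def using discount_nonneg
  by (intro suminf_nonneg summable_discounted_Prob_state mult_nonneg_nonneg Prob_state_nonneg) auto

lemma occupancy_bellman:
  assumes "is_policy \<pi>"
  shows "occupancy \<pi> s q = (if s = q then 1 else 0) + \<gamma> * (\<Sum>r\<in>UNIV. Ppol P \<pi> s r * occupancy \<pi> r q)"
proof -
  let ?f = "\<lambda>t. \<gamma> ^ t * Prob_state P \<pi> t s q"
  have "occupancy \<pi> s q = ?f 0 + (\<Sum>t. ?f (Suc t))"
    unfolding occupancy_def using suminf_split_head[OF summable_discounted_Prob_state[OF assms]] by simp
  also have "?f 0 = (if s = q then 1 else 0)"
    by (simp add: Prob_state_0)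
  also have "(\<Sum>t. ?f (Suc t)) = (\<Sum>t. \<Sum>r\<in>UNIV. \<gamma> * Ppol P \<pi> s r * (\<gamma> ^ t * Prob_state P \<pi> t r q))"
    by (simp add: Prob_state_Suc sum_distrib_left mult_ac)
  also have "\<dots> = (\<Sum>r\<in>UNIV. \<Sum>t. \<gamma> * Ppol P \<pi> s r * (\<gamma> ^ t * Prob_state P \<pi> t r q))"
    using assms by (intro suminf_sum summable_mult summable_discounted_Prob_state)
  also have "\<dots> = (\<Sum>r\<in>UNIV. \<gamma> * Ppol P \<pi> s r * occupancy \<pi> r q)"
    unfolding occupancy_def using assms by (intro sum.cong refl suminf_mult summable_discounted_Prob_state)
  finally show ?thesis
    by (simp add: sum_distrib_left mult_ac)
qed

lemma occupancy_diag_ge_1: "is_policy \<pi> \<Longrightarrow> 1 \<le> occupancy \<pi> s s"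
  by (subst occupancy_bellman)
    (auto intro!: mult_nonneg_nonneg sum_nonneg Ppol_nonneg occupancy_nonneg discount_nonneg)

lemma occupancy_weighted_bellman:
  assumes "is_policy \<pi>"
  shows "(\<Sum>q\<in>UNIV. occupancy \<pi> s q * f q)
    = f s + \<gamma> * (\<Sum>r\<in>UNIV. Ppol P \<pi> s r * (\<Sum>q\<in>UNIV. occupancy \<pi> r q * f q))"
proof -
  have "(\<Sum>q\<in>UNIV. occupancy \<pi> s q * f q)
      = (\<Sum>q\<in>UNIV. (if s = q then f q else 0) + \<gamma> * (\<Sum>r\<in>UNIV. Ppol P \<pi> s r * occupancy \<pi> r q * f q))"
    by (subst occupancy_bellman[OF assms])
      (simp add: algebra_simps sum_distrib_left sum_distrib_right if_distrib[of "times _"] cong: if_cong)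
  also have "\<dots> = f s + \<gamma> * (\<Sum>q\<in>UNIV. \<Sum>r\<in>UNIV. Ppol P \<pi> s r * occupancy \<pi> r q * f q)"
    by (simp add: sum.distrib sum_distrib_left)
  also have "\<dots> = f s + \<gamma> * (\<Sum>r\<in>UNIV. Ppol P \<pi> s r * (\<Sum>q\<in>UNIV. occupancy \<pi> r q * f q))"
    by (subst sum.swap) (simp add: sum_distrib_left mult_ac)
  finally show ?thesis .
qed

text \<open>Policy evaluation is a \<open>\<gamma>\<close>-contraction in the maximum norm, so its fixed point is unique.\<close>

lemma policy_evaluation_unique:
  assumes "is_policy \<pi>"
    and g: "\<And>s. g s = f s + \<gamma> * (\<Sum>r\<in>UNIV. Ppol P \<pi> s r * g r)"
    and g': "\<And>s. g' s = f s + \<gamma> * (\<Sum>r\<in>UNIV. Ppol P \<pi> s r * g' r)"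
  shows "g s = g' s"
proof -
  define d where "d s = g s - g' s" for s
  have d: "d s = \<gamma> * (\<Sum>r\<in>UNIV. Ppol P \<pi> s r * d r)" for s
    unfolding d_def by (subst g, subst g') (simp add: algebra_simps sum_subtractf)
  define m where "m = Max (range (\<lambda>s. \<bar>d s\<bar>))"
  have dm: "\<bar>d s\<bar> \<le> m" for s
    unfolding m_def by (rule Max_ge) auto
  have "\<bar>d s\<bar> \<le> \<gamma> * m" for s
  proof -
    have "\<bar>\<Sum>r\<in>UNIV. Ppol P \<pi> s r * d r\<bar> \<le> (\<Sum>r\<in>UNIV. Ppol P \<pi> s r * m)"
      using sum_abs[of "\<lambda>r. Ppol P \<pi> s r * d r" UNIV]
        sum_mono[of UNIV "\<lambda>r. \<bar>Ppol P \<pi> s r * d r\<bar>" "\<lambda>r. Ppol P \<pi> s r * m"]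
      by (force simp: abs_mult Ppol_nonneg[OF assms(1)] intro: mult_left_mono dm)
    also have "\<dots> = m"
      using Ppol_sum[OF assms(1)] by (simp flip: sum_distrib_right)
    finally show ?thesis
      using discount_nonneg by (subst d) (simp add: abs_mult mult_left_mono)
  qed
  then have "m \<le> \<gamma> * m"
    unfolding m_def by (intro Max.boundedI) auto
  moreover have "0 \<le> m"
    using dm[of s] by simp
  ultimately have "m = 0"
    using discount_less_1 by (smt (verit) mult_le_cancel_right1)
  then show ?thesis
    using dm[of s] unfolding d_def by simp
qed

lemma Vf_eq_occupancy:
  assumes "is_policy \<pi>"
  shows "Vf P c h \<gamma> \<pi> s = (\<Sum>q\<in>UNIV. occupancy \<pi> s q * stage_cost c h \<pi> q)"
proof -
  have "Vf P c h \<gamma> \<pi> s = (\<Sum>t. \<Sum>q\<in>UNIV. \<gamma> ^ t * Prob_state P \<pi> t s q * stage_cost c h \<pi> q)"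
    unfolding Vf_def by (simp add: sum_distrib_left mult.assoc)
  also have "\<dots> = (\<Sum>q\<in>UNIV. \<Sum>t. \<gamma> ^ t * Prob_state P \<pi> t s q * stage_cost c h \<pi> q)"
    using assms by (intro suminf_sum summable_mult2 summable_discounted_Prob_state)
  also have "\<dots> = (\<Sum>q\<in>UNIV. occupancy \<pi> s q * stage_cost c h \<pi> q)"
    unfolding occupancy_def using assms by (intro sum.cong refl suminf_mult2[symmetric] summable_discounted_Prob_state)
  finally show ?thesis .
qed

lemma Vf_bellman:
  "is_policy \<pi> \<Longrightarrow>
    Vf P c h \<gamma> \<pi> s = stage_cost c h \<pi> s + \<gamma> * (\<Sum>r\<in>UNIV. Ppol P \<pi> s r * Vf P c h \<gamma> \<pi> r)"
  by (simp add: Vf_eq_occupancy occupancy_weighted_bellman[of \<pi> s "stage_cost c h \<pi>"])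

lemma Qf_eq:
  assumes "is_policy \<pi>"
  shows "Qf P c h \<gamma> \<pi> s a = c s a + h (\<pi> s) s + \<gamma> * (\<Sum>i\<in>UNIV. P s a i * Vf P c h \<gamma> \<pi> i)"
proof -
  let ?r = "stage_cost c h \<pi>"
  have "(\<Sum>t. \<gamma> ^ Suc t * (\<Sum>q\<in>UNIV. state_dist P \<pi> (P s a) t q * ?r q))
      = (\<Sum>t. \<Sum>i\<in>UNIV. \<gamma> * P s a i * (\<gamma> ^ t * (\<Sum>q\<in>UNIV. Prob_state P \<pi> t i q * ?r q)))"
    by (simp add: state_dist_mixture sum_distrib_left sum_distrib_right mult_ac, subst sum.swap, simp)
  also have "\<dots> = (\<Sum>i\<in>UNIV. \<Sum>t. \<gamma> * P s a i * (\<gamma> ^ t * (\<Sum>q\<in>UNIV. Prob_state P \<pi> t i q * ?r q)))"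
    using assms by (intro suminf_sum summable_mult summable_discounted_expectation)
  also have "\<dots> = (\<Sum>i\<in>UNIV. \<gamma> * P s a i * Vf P c h \<gamma> \<pi> i)"
    unfolding Vf_def using assms by (intro sum.cong refl suminf_mult summable_discounted_expectation)
  finally show ?thesis
    unfolding Qf_def by (simp add: sum_distrib_left mult_ac)
qed

definition advantage :: "('s \<Rightarrow> 'a \<Rightarrow> real) \<Rightarrow> (real^'a \<Rightarrow> 's \<Rightarrow> real) \<Rightarrow> ('s \<Rightarrow> real^'a) \<Rightarrow> ('s \<Rightarrow> real^'a) \<Rightarrow> 's \<Rightarrow> real" where
  "advantage c h \<pi> \<pi>' q = (\<Sum>a\<in>UNIV. Qf P c h \<gamma> \<pi> q a * \<pi>' q $ a) + h (\<pi>' q) q - h (\<pi> q) q - Vf P c h \<gamma> \<pi> q"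

lemma advantage_eq:
  assumes "is_policy \<pi>" and "is_policy \<pi>'"
  shows "advantage c h \<pi> \<pi>' q
    = stage_cost c h \<pi>' q + \<gamma> * (\<Sum>r\<in>UNIV. Ppol P \<pi>' q r * Vf P c h \<gamma> \<pi> r) - Vf P c h \<gamma> \<pi> q"
proof -
  let ?V = "Vf P c h \<gamma> \<pi>"
  have distr: "(\<Sum>a\<in>UNIV. \<pi>' q $ a) = 1"
    using assms(2) unfolding is_policy_def prob_simplex_def by simp
  have "(\<Sum>a\<in>UNIV. Qf P c h \<gamma> \<pi> q a * \<pi>' q $ a)
      = (\<Sum>a\<in>UNIV. \<pi>' q $ a * c q a) + h (\<pi> q) q * (\<Sum>a\<in>UNIV. \<pi>' q $ a)
        + \<gamma> * (\<Sum>a\<in>UNIV. \<Sum>i\<in>UNIV. \<pi>' q $ a * P q a i * ?V i)"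
    by (simp add: Qf_eq[OF assms(1)] algebra_simps sum.distrib sum_distrib_left)
  also have "(\<Sum>a\<in>UNIV. \<Sum>i\<in>UNIV. \<pi>' q $ a * P q a i * ?V i) = (\<Sum>r\<in>UNIV. Ppol P \<pi>' q r * ?V r)"
    unfolding Ppol_def by (subst sum.swap) (simp add: sum_distrib_right)
  finally show ?thesis
    unfolding advantage_def stage_cost_def using distr by simp
qed

lemma advantage_self: "is_policy \<pi> \<Longrightarrow> advantage c h \<pi> \<pi> q = 0"
  by (simp add: advantage_eq Vf_bellman[symmetric])

lemma performance_difference:
  assumes "is_policy \<pi>" and "is_policy \<pi>'"
  shows "Vf P c h \<gamma> \<pi>' s - Vf P c h \<gamma> \<pi> s = (\<Sum>q\<in>UNIV. occupancy \<pi>' s q * advantage c h \<pi> \<pi>' q)"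
proof (rule policy_evaluation_unique[OF assms(2)])
  fix s
  show "Vf P c h \<gamma> \<pi>' s - Vf P c h \<gamma> \<pi> s = advantage c h \<pi> \<pi>' s
      + \<gamma> * (\<Sum>r\<in>UNIV. Ppol P \<pi>' s r * (Vf P c h \<gamma> \<pi>' r - Vf P c h \<gamma> \<pi> r))"
    by (subst Vf_bellman[OF assms(2)]) (simp add: advantage_eq[OF assms] algebra_simps sum_subtractf)
qed (rule occupancy_weighted_bellman[OF assms(2)])

end

locale pmd = mdp P \<gamma>
  for P :: "'s::finite \<Rightarrow> 'a::finite \<Rightarrow> 's \<Rightarrow> real" and \<gamma> :: real +
  fixes c :: "'s \<Rightarrow> 'a \<Rightarrow> real"
    and h :: "real^'a \<Rightarrow> 's \<Rightarrow> real"
    and \<omega> :: "real^'a \<Rightarrow> real"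
    and gw :: "real^'a \<Rightarrow> real^'a"
    and \<eta> :: "nat \<Rightarrow> real"
    and \<pi> :: "nat \<Rightarrow> 's \<Rightarrow> real^'a"
  assumes omega_diff: "\<And>p. p \<in> prob_simplex \<Longrightarrow> (\<omega> has_derivative (\<lambda>v. gw p \<bullet> v)) (at p)"
    and omega_convex: "convex_on prob_simplex \<omega>"
    and h_convex: "\<And>s. convex_on prob_simplex (\<lambda>p. h p s)"
    and init: "is_policy (\<pi> 0)"
    and pmd_steps: "\<And>t. pmd_step P c h \<gamma> \<omega> gw (\<eta> t) (\<pi> t) (\<pi> (Suc t))"
    and eta_pos: "\<And>t. 0 < \<eta> t"
    and eta_mono: "mono \<eta>"
begin

abbreviation V :: "('s \<Rightarrow> real^'a) \<Rightarrow> 's \<Rightarrow> real" where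
  "V \<equiv> Vf P c h \<gamma>"

lemma is_policy_iterate: "is_policy (\<pi> t)"
proof (induction t)
  case 0
  show ?case
    by (rule init)
next
  case (Suc t)
  show ?case
    using pmd_steps[of t] unfolding pmd_step_def is_arg_min_def is_policy_def by blast
qed

lemma iterate_in_simplex: "\<pi> t q \<in> prob_simplex"
  using is_policy_iterate unfolding is_policy_def by blast

lemma bregman_iterate_nonneg:
  assumes "p \<in> prob_simplex"
  shows "0 \<le> bregman \<omega> gw p (\<pi> t q)"
  by (rule bregman_nonneg[where gw = gw, OF omega_convex omega_diff iterate_in_simplex assms])
    (rule iterate_in_simplex)

lemma pmd_three_point:
  assumes "is_policy \<sigma>"
  shows "\<eta> t * (advantage c h (\<pi> t) (\<pi> (Suc t)) q - advantage c h (\<pi> t) \<sigma> q)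
      + bregman \<omega> gw (\<pi> (Suc t) q) (\<pi> t q) + bregman \<omega> gw (\<sigma> q) (\<pi> (Suc t) q)
    \<le> bregman \<omega> gw (\<sigma> q) (\<pi> t q)"
proof -
  define L where "L p = (\<Sum>a\<in>UNIV. Qf P c h \<gamma> (\<pi> t) q a * p $ a) + h p q" for p
  have "is_arg_min (\<lambda>p. \<eta> t * L p + bregman \<omega> gw p (\<pi> t q)) (\<lambda>p. p \<in> prob_simplex) (\<pi> (Suc t) q)"
    using pmd_steps[of t] unfolding pmd_step_def L_def by blast
  moreover have "convex_on prob_simplex L"
    unfolding L_def by (intro convex_on_add convex_on_coordinate_combination convex_prob_simplex h_convex)
  moreover have "\<sigma> q \<in> prob_simplex"
    using assms unfolding is_policy_def by blast
  ultimately have "\<eta> t * (L (\<pi> (Suc t) q) - L (\<sigma> q)) + bregman \<omega> gw (\<pi> (Suc t) q) (\<pi> t q)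
      + bregman \<omega> gw (\<sigma> q) (\<pi> (Suc t) q) \<le> bregman \<omega> gw (\<sigma> q) (\<pi> t q)"
    using eta_pos[of t] by (intro bregman_prox_three_point omega_diff iterate_in_simplex) auto
  \<comment> \<open>The prox objective and the advantage differ by terms that do not depend on the argument.\<close>
  moreover have "L (\<pi> (Suc t) q) - L (\<sigma> q) = advantage c h (\<pi> t) (\<pi> (Suc t)) q - advantage c h (\<pi> t) \<sigma> q"
    unfolding L_def advantage_def by simp
  ultimately show ?thesis
    by simp
qed

lemma pmd_advantage_nonpos: "advantage c h (\<pi> t) (\<pi> (Suc t)) q \<le> 0"
proof -
  have "\<eta> t * advantage c h (\<pi> t) (\<pi> (Suc t)) q \<le> 0"
    using pmd_three_point[where \<sigma> = "\<pi> t" and t = t and q = q, OF is_policy_iterate] advantage_self[OF is_policy_iterate]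
      bregman_iterate_nonneg[where p = "\<pi> (Suc t) q" and t = t and q = q, OF iterate_in_simplex]
      bregman_iterate_nonneg[where p = "\<pi> t q" and t = "Suc t" and q = q, OF iterate_in_simplex]
    by (simp add: bregman_def)
  then show ?thesis
    using eta_pos[of t] by (simp add: mult_le_0_iff)
qed

text \<open>The advantage is nonpositive in every state, so in the performance difference only the
  diagonal occupancy, which is at least 1, needs to be kept.\<close>

lemma pmd_value_improvement: "V (\<pi> (Suc t)) q \<le> V (\<pi> t) q + advantage c h (\<pi> t) (\<pi> (Suc t)) q"
proof -
  let ?A = "advantage c h (\<pi> t) (\<pi> (Suc t))" and ?K = "occupancy (\<pi> (Suc t)) q"
  have "V (\<pi> (Suc t)) q - V (\<pi> t) q = (\<Sum>r\<in>UNIV. ?K r * ?A r)"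
    by (rule performance_difference[OF is_policy_iterate is_policy_iterate])
  also have "\<dots> \<le> (\<Sum>r\<in>UNIV. if r = q then ?K q * ?A q else 0)"
    by (rule sum_mono) (auto intro: mult_nonneg_nonpos occupancy_nonneg is_policy_iterate pmd_advantage_nonpos)
  also have "\<dots> = ?K q * ?A q"
    by simp
  also have "\<dots> \<le> ?A q"
    using occupancy_diag_ge_1[OF is_policy_iterate, of "Suc t" q] pmd_advantage_nonpos[of t q]
    by (simp add: mult_le_cancel_right2)
  finally show ?thesis
    by simp
qed

lemma pmd_value_antimono: "t \<le> n \<Longrightarrow> V (\<pi> n) q \<le> V (\<pi> t) q"
proof (induction n rule: dec_induct)
  case (step n)
  then show ?case
    using pmd_value_improvement[of n q] pmd_advantage_nonpos[of n q] by simp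
qed simp

lemma pmd_step_bound:
  assumes "is_policy \<sigma>"
  shows "\<eta> t * (V (\<pi> (Suc t)) q - V (\<pi> t) q - advantage c h (\<pi> t) \<sigma> q)
      + bregman \<omega> gw (\<sigma> q) (\<pi> (Suc t) q)
    \<le> bregman \<omega> gw (\<sigma> q) (\<pi> t q)"
proof -
  have "\<eta> t * (V (\<pi> (Suc t)) q - V (\<pi> t) q - advantage c h (\<pi> t) \<sigma> q)
      \<le> \<eta> t * (advantage c h (\<pi> t) (\<pi> (Suc t)) q - advantage c h (\<pi> t) \<sigma> q)"
    using pmd_value_improvement[of t q] eta_pos[of t] by (intro mult_left_mono) auto
  then show ?thesis
    using pmd_three_point[where t = t and q = q, OF assms] bregman_iterate_nonneg[where p = "\<pi> (Suc t) q" and t = t and q = q, OF iterate_in_simplex]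
    by linarith
qed


definition pmd_potential :: "('s \<Rightarrow> real^'a) \<Rightarrow> 's \<Rightarrow> nat \<Rightarrow> real" where
  "pmd_potential \<sigma> s t = (\<Sum>q\<in>UNIV. occupancy \<sigma> s q * (V (\<pi> t) q - V \<sigma> q))
     + (\<Sum>q\<in>UNIV. occupancy \<sigma> s q * bregman \<omega> gw (\<sigma> q) (\<pi> t q)) / \<eta> t"

lemma pmd_weighted_step_bound:
  assumes "is_policy \<sigma>"
  shows "\<eta> t * ((\<Sum>q\<in>UNIV. occupancy \<sigma> s q * (V (\<pi> (Suc t)) q - V (\<pi> t) q)) + (V (\<pi> t) s - V \<sigma> s))
      + (\<Sum>q\<in>UNIV. occupancy \<sigma> s q * bregman \<omega> gw (\<sigma> q) (\<pi> (Suc t) q))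
    \<le> (\<Sum>q\<in>UNIV. occupancy \<sigma> s q * bregman \<omega> gw (\<sigma> q) (\<pi> t q))"
    (is "\<eta> t * (?X + _) + ?E' \<le> ?E")
proof -
  let ?K = "occupancy \<sigma> s" and ?A = "advantage c h (\<pi> t) \<sigma>"
  have "(\<Sum>q\<in>UNIV. ?K q * ?A q) = V \<sigma> s - V (\<pi> t) s"
    using performance_difference[OF is_policy_iterate assms] by simp
  then have "\<eta> t * (?X + (V (\<pi> t) s - V \<sigma> s)) + ?E' = \<eta> t * (?X - (\<Sum>q\<in>UNIV. ?K q * ?A q)) + ?E'"
    by simp
  also have "\<dots> = (\<Sum>q\<in>UNIV. ?K q * (\<eta> t * (V (\<pi> (Suc t)) q - V (\<pi> t) q - ?A q)
      + bregman \<omega> gw (\<sigma> q) (\<pi> (Suc t) q)))"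
    by (simp add: algebra_simps sum.distrib sum_subtractf sum_distrib_left)
  also have "\<dots> \<le> ?E"
    by (intro sum_mono mult_left_mono pmd_step_bound assms occupancy_nonneg)
  finally show ?thesis .
qed

lemma pmd_potential_decrease:
  assumes "is_policy \<sigma>"
  shows "pmd_potential \<sigma> s (Suc t) + (V (\<pi> t) s - V \<sigma> s) \<le> pmd_potential \<sigma> s t"
proof -
  let ?K = "occupancy \<sigma> s"
  let ?E = "\<lambda>t. \<Sum>q\<in>UNIV. ?K q * bregman \<omega> gw (\<sigma> q) (\<pi> t q)"
  let ?X = "(\<Sum>q\<in>UNIV. ?K q * (V (\<pi> (Suc t)) q - V (\<pi> t) q)) + (V (\<pi> t) s - V \<sigma> s)"
  have "\<sigma> q \<in> prob_simplex" for q
    using assms unfolding is_policy_def by blast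
  then have "0 \<le> ?E (Suc t)"
    by (intro sum_nonneg mult_nonneg_nonneg occupancy_nonneg assms bregman_iterate_nonneg)
  moreover have "\<eta> t \<le> \<eta> (Suc t)"
    using eta_mono by (simp add: mono_def)
  ultimately have "?E (Suc t) / \<eta> (Suc t) \<le> ?E (Suc t) / \<eta> t"
    using eta_pos[of t] by (intro divide_left_mono) auto
  moreover have "?X + ?E (Suc t) / \<eta> t \<le> ?E t / \<eta> t"
  proof -
    have "(?X + ?E (Suc t) / \<eta> t) * \<eta> t = \<eta> t * ?X + ?E (Suc t)"
      using eta_pos[of t] by (simp add: algebra_simps)
    then show ?thesis
      using pmd_weighted_step_bound[OF assms, of t s] eta_pos[of t] by (simp add: pos_le_divide_eq)
  qed
  moreover have "(\<Sum>q\<in>UNIV. ?K q * (V (\<pi> (Suc t)) q - V \<sigma> q))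
      = (\<Sum>q\<in>UNIV. ?K q * (V (\<pi> t) q - V \<sigma> q)) + (\<Sum>q\<in>UNIV. ?K q * (V (\<pi> (Suc t)) q - V (\<pi> t) q))"
    by (simp add: algebra_simps sum.distrib sum_subtractf)
  ultimately show ?thesis
    unfolding pmd_potential_def by linarith
qed

lemma pmd_potential_telescope:
  assumes "is_policy \<sigma>"
  shows "pmd_potential \<sigma> s n + (\<Sum>t<n. V (\<pi> t) s - V \<sigma> s) \<le> pmd_potential \<sigma> s 0"
proof (induction n)
  case (Suc n)
  then show ?case
    using pmd_potential_decrease[OF assms, of s n] by simp
qed simp

lemma pmd_rate:
  assumes "is_policy \<sigma>" and optimal: "\<And>\<pi>' q. is_policy \<pi>' \<Longrightarrow> V \<sigma> q \<le> V \<pi>' q"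
  shows "real k * (V (\<pi> k) s - V \<sigma> s) \<le> pmd_potential \<sigma> s 0"
proof -
  have "\<sigma> q \<in> prob_simplex" for q
    using assms unfolding is_policy_def by blast
  then have "0 \<le> pmd_potential \<sigma> s k"
    unfolding pmd_potential_def using eta_pos[of k] optimal[OF is_policy_iterate]
    by (intro add_nonneg_nonneg divide_nonneg_pos sum_nonneg mult_nonneg_nonneg occupancy_nonneg assms
        bregman_iterate_nonneg) auto
  have "real k * (V (\<pi> k) s - V \<sigma> s) = (\<Sum>t<k. V (\<pi> k) s - V \<sigma> s)"
    by simp
  also have "\<dots> \<le> (\<Sum>t<k. V (\<pi> t) s - V \<sigma> s)"
    by (intro sum_mono) (simp add: pmd_value_antimono)
  also have "\<dots> \<le> pmd_potential \<sigma> s 0"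
    using pmd_potential_telescope[OF assms(1), of s k] \<open>0 \<le> pmd_potential \<sigma> s k\<close> by simp
  finally show ?thesis .
qed

end

theorem theorem3p3:
  fixes P :: "'s::finite \<Rightarrow> 'a::finite \<Rightarrow> 's \<Rightarrow> real"
    and c :: "'s \<Rightarrow> 'a \<Rightarrow> real"
    and \<gamma> :: real
    and \<omega> :: "real^'a \<Rightarrow> real"
    and gw :: "real^'a \<Rightarrow> real^'a"
    and h :: "real^'a \<Rightarrow> 's \<Rightarrow> real"
    and \<mu>h :: real
    and \<pi>opt :: "'s \<Rightarrow> real^'a"
    and \<pi> :: "nat \<Rightarrow> 's \<Rightarrow> real^'a"
    and \<eta> :: "nat \<Rightarrow> real"
    and k :: nat and s :: 's
  assumes P_nonneg: "\<And>s a s'. 0 \<le> P s a s'"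
    and P_sum: "\<And>s a. (\<Sum>s'\<in>UNIV. P s a s') = 1"
    and gamma: "0 \<le> \<gamma>" "\<gamma> < 1"
    and omega_diff: "\<And>p. p \<in> prob_simplex \<Longrightarrow> (\<omega> has_derivative (\<lambda>v. gw p \<bullet> v)) (at p)"
    and omega_convex: "convex_on prob_simplex \<omega>"
    and h_convex: "\<And>s. convex_on prob_simplex (\<lambda>p. h p s)"
    and h_closed: "\<And>s. closed {(p, t). p \<in> prob_simplex \<and> h p s \<le> t}"
    and mu_h: "0 \<le> \<mu>h"
    and h_strong: "\<And>s p p' g. p \<in> prob_simplex \<Longrightarrow> p' \<in> prob_simplex \<Longrightarrow> is_subgrad_simplex (\<lambda>x. h x s) p' g \<Longrightarrow>
                     h p s - h p' s - g \<bullet> (p - p') \<ge> \<mu>h * bregman \<omega> gw p p'"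
    and opt_policy: "is_policy \<pi>opt"
    and opt: "\<And>\<pi>' s. is_policy \<pi>' \<Longrightarrow> Vf P c h \<gamma> \<pi>opt s \<le> Vf P c h \<gamma> \<pi>' s"
    and init: "is_policy (\<pi> 0)"
    and pmd: "\<And>t. pmd_step P c h \<gamma> \<omega> gw (\<eta> t) (\<pi> t) (\<pi> (Suc t))"
    and eta_pos: "\<And>t. 0 < \<eta> t"
    and eta_mono: "mono \<eta>"
    and k: "1 \<le> k"
  shows "Vf P c h \<gamma> (\<pi> k) s - Vf P c h \<gamma> \<pi>opt s
    \<le> (\<Sum>q\<in>UNIV. kappa P \<gamma> \<pi>opt s q *
          (\<eta> 0 * (Vf P c h \<gamma> (\<pi> 0) q - Vf P c h \<gamma> \<pi>opt q) + Dpol \<omega> gw \<pi>opt (\<pi> 0) q))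
       / (\<eta> 0 * (1 - \<gamma>) * real k)"
proof -
  interpret pmd P \<gamma> c h \<omega> gw \<eta> \<pi>
    using P_nonneg P_sum gamma omega_diff omega_convex h_convex init pmd eta_pos eta_mono
    by unfold_locales auto
  have rate: "real k * (V (\<pi> k) s - V \<pi>opt s) \<le> pmd_potential \<pi>opt s 0"
    by (rule pmd_rate[OF opt_policy opt])
  let ?K = "occupancy \<pi>opt s"
  have "(\<Sum>q\<in>UNIV. kappa P \<gamma> \<pi>opt s q *
          (\<eta> 0 * (Vf P c h \<gamma> (\<pi> 0) q - Vf P c h \<gamma> \<pi>opt q) + Dpol \<omega> gw \<pi>opt (\<pi> 0) q))
      = (\<Sum>q\<in>UNIV. (1 - \<gamma>) * (\<eta> 0 * (?K q * (V (\<pi> 0) q - V \<pi>opt q))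
          + ?K q * bregman \<omega> gw (\<pi>opt q) (\<pi> 0 q)))"
    unfolding kappa_def occupancy_def[symmetric] Dpol_def by (intro sum.cong refl) (simp add: algebra_simps)
  also have "\<dots> = (1 - \<gamma>) * (\<eta> 0 * (\<Sum>q\<in>UNIV. ?K q * (V (\<pi> 0) q - V \<pi>opt q))
      + (\<Sum>q\<in>UNIV. ?K q * bregman \<omega> gw (\<pi>opt q) (\<pi> 0 q)))"
    by (simp only: sum.distrib sum_distrib_left distrib_left)
  also have "\<dots> = (1 - \<gamma>) * \<eta> 0 * pmd_potential \<pi>opt s 0"
    unfolding pmd_potential_def using eta_pos[of 0] by (simp add: field_simps)
  finally show ?thesis
    using rate eta_pos[of 0] gamma k by (simp add: pos_le_divide_eq mult_ac)
qed

end
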